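(* Let $H$ be a digraph with at least two vertices and $r\in V(H)$ such that every vertex of $H$ is reachable from $r$, and let $B_r$ be the diblock of $r$ in $H$. Then for every pair of distinct vertices $x,y\in B_r$ there exist a directed $r$–$x$ path $P_x$ and a directed $r$–$y$ path $P_y$ such that $V(P_x)\cap V(P_y)=\{r\}$.
   Context: Digraphs are finite and without loops; paths are directed. A vertex $v$ is bi-reachable from $r$ if there are two internally vertex-disjoint directed paths from $r$ to $v$. For a digraph $H$ with at least two vertices and $r\in V(H)$ such that every vertex of $H$ is reachable from $r$, the diblock $B_r$ of $r$ in $H$ is the set of all vertices bi-reachable from $r$, together with $r$ and all out-neighbours of $r$. *)

theory Defs
  imports Main
begin

definition loopless_digraph :: "'a set \<Rightarrow> ('a \<times> 'a) set \<Rightarrow> bool" where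
  "loopless_digraph V E \<longleftrightarrow> finite V \<and> E \<subseteq> V \<times> V \<and> (\<forall>x. (x, x) \<notin> E)"

definition dpath :: "'a set \<Rightarrow> ('a \<times> 'a) set \<Rightarrow> 'a list \<Rightarrow> bool" where
  "dpath V E p \<longleftrightarrow> p \<noteq> [] \<and> set p \<subseteq> V \<and> distinct p \<and>
     (\<forall>i. Suc i < length p \<longrightarrow> (p ! i, p ! Suc i) \<in> E)"

definition dpath_from_to :: "'a set \<Rightarrow> ('a \<times> 'a) set \<Rightarrow> 'a \<Rightarrow> 'a \<Rightarrow> 'a list \<Rightarrow> bool" where
  "dpath_from_to V E u v p \<longleftrightarrow> dpath V E p \<and> hd p = u \<and> last p = v"

definition reachable :: "'a set \<Rightarrow> ('a \<times> 'a) set \<Rightarrow> 'a \<Rightarrow> 'a \<Rightarrow> bool" where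
  "reachable V E u v \<longleftrightarrow> (\<exists>p. dpath_from_to V E u v p)"

definition bireachable :: "'a set \<Rightarrow> ('a \<times> 'a) set \<Rightarrow> 'a \<Rightarrow> 'a \<Rightarrow> bool" where
  "bireachable V E r v \<longleftrightarrow> (\<exists>P Q. P \<noteq> Q \<and> dpath_from_to V E r v P \<and>
      dpath_from_to V E r v Q \<and> set P \<inter> set Q = {r, v})"

definition diblock :: "'a set \<Rightarrow> ('a \<times> 'a) set \<Rightarrow> 'a \<Rightarrow> 'a set" where
  "diblock V E r = {v \<in> V. bireachable V E r v} \<union> {r} \<union> {v. (r, v) \<in> E}"

end

theory Submission
  imports Defs
begin

text \<open>Every vertex x \<noteq> r of the diblock has two r--x paths P, Q meeting only in r and x,
and every other vertex y \<noteq> r of the diblock has an r--y path R avoiding x (one of the two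
paths witnessing bi-reachability of y, or the arc ry). Let w be the last vertex of R lying
on P \<union> Q, say on P; then w \<noteq> x. Following P from r to w and then R from w to y gives an
r--y path that meets Q only in r.\<close>

lemma dpath_iff_successively:
  "dpath V E p \<longleftrightarrow>
     p \<noteq> [] \<and> set p \<subseteq> V \<and> distinct p \<and> successively (\<lambda>a b. (a, b) \<in> E) p"
  unfolding dpath_def successively_conv_nth by simp

lemma dpath_from_to_hd_in_set: "dpath_from_to V E u v p \<Longrightarrow> u \<in> set p"
  unfolding dpath_from_to_def dpath_def by auto

lemma dpath_from_to_prefix:
  "dpath_from_to V E u v (a @ w # b) \<Longrightarrow> dpath_from_to V E u w (a @ [w])"
  unfolding dpath_from_to_def dpath_iff_successively
  by (auto simp: successively_append_iff hd_append split: if_splits)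

lemma dpath_from_to_suffix:
  "dpath_from_to V E u v (a @ w # b) \<Longrightarrow> dpath_from_to V E w v (w # b)"
  unfolding dpath_from_to_def dpath_iff_successively
  by (auto simp: successively_append_iff)

lemma dpath_from_to_append:
  assumes "dpath_from_to V E u w (a @ [w])" "dpath_from_to V E w v (w # d)"
    and "set a \<inter> set (w # d) = {}"
  shows "dpath_from_to V E u v (a @ w # d)"
proof -
  have "a @ w # d = (a @ [w]) @ d" by simp
  then show ?thesis
    using assms unfolding dpath_from_to_def dpath_iff_successively
    by (auto simp: successively_append_iff successively_Cons hd_append split: if_splits)
qed

lemma dpath_from_to_last_notin_prefix:
  assumes "dpath_from_to V E u v (a @ w # b)"
  shows "v \<notin> set a"
proof -
  have "v \<in> set (w # b)" and "distinct (a @ w # b)"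
    using assms last_in_set[of "w # b"] unfolding dpath_from_to_def dpath_def by auto
  then show ?thesis by auto
qed

lemma arc_dpath_from_to:
  assumes "loopless_digraph V E" "(u, v) \<in> E"
  shows "dpath_from_to V E u v [u, v]"
  using assms unfolding loopless_digraph_def dpath_from_to_def dpath_def
  by (auto simp: less_Suc_eq)

lemma diblock_internally_disjoint_paths:
  assumes "loopless_digraph V E" "x \<in> diblock V E r" "x \<noteq> r"
  obtains P Q where "dpath_from_to V E r x P" "dpath_from_to V E r x Q"
    "set P \<inter> set Q \<subseteq> {r, x}"
proof (cases "(r, x) \<in> E")
  case True
  then have "dpath_from_to V E r x [r, x]" by (rule arc_dpath_from_to[OF assms(1)])
  with that show ?thesis by auto
next
  case False
  with assms(2,3) have "bireachable V E r x" unfolding diblock_def by auto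
  with that show ?thesis unfolding bireachable_def by blast
qed

lemma diblock_dpath_avoiding:
  assumes "loopless_digraph V E" "y \<in> diblock V E r" "y \<noteq> r" "x \<noteq> r" "x \<noteq> y"
  obtains R where "dpath_from_to V E r y R" "x \<notin> set R"
proof (cases "(r, y) \<in> E")
  case True
  then have "dpath_from_to V E r y [r, y]" by (rule arc_dpath_from_to[OF assms(1)])
  with that assms(4,5) show ?thesis by auto
next
  case False
  with assms(2,3) have "bireachable V E r y" unfolding diblock_def by auto
  then obtain Q1 Q2 where "dpath_from_to V E r y Q1" "dpath_from_to V E r y Q2"
    "set Q1 \<inter> set Q2 = {r, y}" unfolding bireachable_def by blast
  with that assms(4,5) show ?thesis by blast
qed

lemma reroute_along_first_path:
  assumes P: "dpath_from_to V E r x (a @ w # b)" and Q: "dpath_from_to V E r x Q"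
    and PQ: "set (a @ w # b) \<inter> set Q \<subseteq> {r, x}" and "w \<noteq> x"
    and T: "dpath_from_to V E w y (w # d)" and d: "set d \<inter> (set (a @ w # b) \<union> set Q) = {}"
  shows "dpath_from_to V E r y (a @ w # d) \<and> set Q \<inter> set (a @ w # d) = {r}"
proof -
  have "distinct (a @ w # b)" using P unfolding dpath_from_to_def dpath_def by simp
  with d have "set a \<inter> set (w # d) = {}" by auto
  with dpath_from_to_prefix[OF P] T
  have R: "dpath_from_to V E r y (a @ w # d)" by (rule dpath_from_to_append)
  have "x \<notin> set (a @ [w])"
    using dpath_from_to_last_notin_prefix[OF P] \<open>w \<noteq> x\<close> by auto
  with PQ d have "set Q \<inter> set (a @ w # d) \<subseteq> {r}" by auto
  moreover have "r \<in> set Q \<inter> set (a @ w # d)"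
    using dpath_from_to_hd_in_set[OF Q] dpath_from_to_hd_in_set[OF R] by blast
  ultimately show ?thesis using R by blast
qed

lemma disjoint_paths_from_bypass:
  assumes P: "dpath_from_to V E r x P" and Q: "dpath_from_to V E r x Q"
    and PQ: "set P \<inter> set Q \<subseteq> {r, x}"
    and R: "dpath_from_to V E r y R" and "x \<notin> set R"
  shows "\<exists>Px Py. dpath_from_to V E r x Px \<and> dpath_from_to V E r y Py \<and>
           set Px \<inter> set Py = {r}"
proof -
  have "r \<in> set R \<inter> (set P \<union> set Q)"
    using dpath_from_to_hd_in_set[OF R] dpath_from_to_hd_in_set[OF P] by blast
  then obtain c w d where R_split: "R = c @ w # d" and w: "w \<in> set P \<union> set Q"
    and d: "set d \<inter> (set P \<union> set Q) = {}"
    using split_list_last_prop[of R "\<lambda>v. v \<in> set P \<union> set Q"] by blast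
  have T: "dpath_from_to V E w y (w # d)" using R R_split by (metis dpath_from_to_suffix)
  have "w \<noteq> x" using \<open>x \<notin> set R\<close> R_split by auto
  have reroute: "\<exists>Px Py. dpath_from_to V E r x Px \<and> dpath_from_to V E r y Py \<and>
      set Px \<inter> set Py = {r}"
    if "dpath_from_to V E r x P'" "dpath_from_to V E r x Q'" "set P' \<inter> set Q' \<subseteq> {r, x}"
      "w \<in> set P'" "set d \<inter> (set P' \<union> set Q') = {}" for P' Q'
  proof -
    obtain a b where "P' = a @ w # b" using \<open>w \<in> set P'\<close> split_list by metis
    with that reroute_along_first_path[of V E r x a w b Q' y d] \<open>w \<noteq> x\<close> T show ?thesis
      by blast
  qed
  from w show ?thesis
  proof
    assume "w \<in> set P"
    with reroute[OF P Q PQ _] d show ?thesis by blast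
  next
    assume "w \<in> set Q"
    with reroute[OF Q P _ _] PQ d show ?thesis by blast
  qed
qed

theorem lemma5:
  fixes V :: "'a set" and E :: "('a \<times> 'a) set" and r x y :: 'a
  assumes "loopless_digraph V E"
    and "card V \<ge> 2"
    and "r \<in> V"
    and "\<forall>v\<in>V. reachable V E r v"
    and "x \<in> diblock V E r" and "y \<in> diblock V E r" and "x \<noteq> y"
  shows "\<exists>Px Py. dpath_from_to V E r x Px \<and> dpath_from_to V E r y Py \<and>
           set Px \<inter> set Py = {r}"
proof -
  have diblock_reachable: "\<exists>p. dpath_from_to V E r v p" if "v \<in> diblock V E r" for v
    using that assms(1,3,4) unfolding diblock_def loopless_digraph_def reachable_def by blast
  have trivial: "dpath_from_to V E r r [r]"
    using assms(3) unfolding dpath_from_to_def dpath_def by simp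
  consider "x = r" | "y = r" | "x \<noteq> r" "y \<noteq> r" by blast
  then show ?thesis
  proof cases
    case 1
    with trivial diblock_reachable[OF assms(6)] dpath_from_to_hd_in_set show ?thesis
      by fastforce
  next
    case 2
    with trivial diblock_reachable[OF assms(5)] dpath_from_to_hd_in_set show ?thesis
      by fastforce
  next
    case 3
    obtain P Q where "dpath_from_to V E r x P" "dpath_from_to V E r x Q"
      "set P \<inter> set Q \<subseteq> {r, x}"
      using diblock_internally_disjoint_paths[OF assms(1,5) 3(1)] .
    moreover obtain R where "dpath_from_to V E r y R" "x \<notin> set R"
      using diblock_dpath_avoiding[OF assms(1,6) 3(2,1) assms(7)] .
    ultimately show ?thesis by (rule disjoint_paths_from_bypass)
  qed
qed

end
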